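(* Let $m \le n$, let $1 \le h \le k \le m$, and let $X$ be any linear operator on $\mathcal{H}_n \otimes \mathcal{H}_m$. Then \[ \|X\|_{S(h)} \le \|X\|_{S(k)} \le \frac{k}{h}\|X\|_{S(h)}. \]
   Context: $\mathcal{H}_d = \mathbb{C}^d$ and $m\le n$. $SR$ denotes Schmidt rank, i.e. the number of nonzero singular values of the coefficient matrix of a vector in $\mathcal{H}_n\otimes\mathcal{H}_m$. For $1\le k\le m$, \[ \|X\|_{S(k)} := \sup\{|\langle w|X|v\rangle| : |v\rangle,|w\rangle \text{ unit vectors}, SR(|v\rangle),SR(|w\rangle)\le k\}. \] *)

theory Defs
  imports "HOL-Analysis.Analysis"
begin

text \<open>A vector in H_n \<otimes> H_m is a vector of complex coefficients indexed by
  pairs (i,j) with i in 'n (|'n| = n) and j in 'm (|'m| = m).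
  Its coefficient matrix is the n x m matrix (v (i,j)).\<close>

definition coeff_matrix :: "complex ^ ('n::finite \<times> 'm::finite) \<Rightarrow> complex ^ 'm ^ 'n" where
  "coeff_matrix v = (\<chi> i j. v $ (i, j))"

text \<open>Schmidt rank: number of nonzero singular values of the coefficient matrix,
  i.e. the rank of the coefficient matrix.\<close>
definition schmidt_rank :: "complex ^ ('n::finite \<times> 'm::finite) \<Rightarrow> nat" where
  "schmidt_rank v = rank (coeff_matrix v)"

definition braket :: "complex ^ 'a::finite \<Rightarrow> complex ^ 'a ^ 'a \<Rightarrow> complex ^ 'a \<Rightarrow> complex" where
  "braket w X v = (\<Sum>i\<in>UNIV. cnj (w $ i) * (X *v v) $ i)"

definition SK_norm :: "nat \<Rightarrow> complex ^ ('n::finite \<times> 'm::finite) ^ ('n \<times> 'm) \<Rightarrow> real" where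
  "SK_norm k X = Sup {cmod (braket w X v) | v w.
      norm v = 1 \<and> norm w = 1 \<and> schmidt_rank v \<le> k \<and> schmidt_rank w \<le> k}"

end

theory Submission
  imports Defs
begin

(* A vector v of Schmidt rank at most k is an orthogonal sum u_0 + ... + u_(k-1) of product
   vectors (Gram-Schmidt applied to the rows of its coefficient matrix).  Summing over the k
   cyclic windows of h consecutive indices gives vectors V_j of Schmidt rank at most h.  Every u_i
   lies in exactly h windows, so sum_j |V_j|^2 = h |v|^2 and, by Cauchy-Schwarz,
   sum_j |V_j| <= sqrt (k h) for a unit vector v.  Doing the same for w,
   h^2 <w|X|v> = sum_(l,j) <W_l|X|V_j>, and each term is at most |X|_S(h) |W_l| |V_j|, whence
   h^2 |<w|X|v>| <= k h |X|_S(h).  The lower bound is monotonicity of the supremum. *)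

definition cinner :: "complex^'a::finite \<Rightarrow> complex^'a \<Rightarrow> complex" where
  "cinner x y = (\<Sum>i\<in>UNIV. cnj (x$i) * y$i)"

lemma cinner_add_left: "cinner (x + y) z = cinner x z + cinner y z"
  by (simp add: cinner_def distrib_right sum.distrib)

lemma cinner_add_right: "cinner x (y + z) = cinner x y + cinner x z"
  by (simp add: cinner_def distrib_left sum.distrib)

lemma cinner_diff_right: "cinner x (y - z) = cinner x y - cinner x z"
  by (simp add: cinner_def right_diff_distrib sum_subtractf)

lemma cinner_smult_left: "cinner (c *s x) y = cnj c * cinner x y"
  by (simp add: cinner_def sum_distrib_left mult.assoc)

lemma cinner_smult_right: "cinner x (c *s y) = c * cinner x y"
  by (simp add: cinner_def sum_distrib_left mult.left_commute)

lemma cinner_zero_left [simp]: "cinner 0 y = 0"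
  and cinner_zero_right [simp]: "cinner x 0 = 0"
  by (simp_all add: cinner_def)

lemma cinner_sum_left: "cinner (sum f I) y = (\<Sum>i\<in>I. cinner (f i) y)"
  by (induction I rule: infinite_finite_induct) (simp_all add: cinner_add_left)

lemma cinner_sum_right: "cinner x (sum f I) = (\<Sum>i\<in>I. cinner x (f i))"
  by (induction I rule: infinite_finite_induct) (simp_all add: cinner_add_right)

lemma cinner_commute: "cinner y x = cnj (cinner x y)"
  by (simp add: cinner_def mult.commute)

lemma inner_eq_Re_cinner: "x \<bullet> y = Re (cinner x y)"
  by (simp add: inner_vec_def cinner_def inner_complex_def)

lemma cinner_self: "cinner x x = of_real ((norm x)\<^sup>2)"
proof -
  have "cinner x x = (\<Sum>i\<in>UNIV. of_real ((cmod (x$i))\<^sup>2))"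
    unfolding cinner_def by (intro sum.cong refl) (metis complex_norm_square mult.commute of_real_power)
  then show ?thesis
    by (simp add: norm_vec_def L2_set_def sum_nonneg)
qed

lemma norm_cinner_le: "cmod (cinner x y) \<le> norm x * norm y"
proof -
  have "cmod (cinner x y) \<le> (\<Sum>i\<in>UNIV. \<bar>cmod (x$i)\<bar> * \<bar>cmod (y$i)\<bar>)"
    unfolding cinner_def by (rule order_trans[OF norm_sum]) (simp add: norm_mult)
  also have "\<dots> \<le> L2_set (\<lambda>i. cmod (x$i)) UNIV * L2_set (\<lambda>i. cmod (y$i)) UNIV"
    by (rule L2_set_mult_ineq)
  finally show ?thesis by (simp add: norm_vec_def)
qed

lemma norm_smult_vec: "norm (c *s (x::complex^'a::finite)) = cmod c * norm x"
  by (simp add: norm_vec_def L2_set_right_distrib norm_mult)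

lemma norm_axis_complex [simp]: "norm (axis i (1::complex)) = 1"
  by (simp add: norm_eq_1 inner_axis_axis)

lemma norm_sum_pairwise_cinner_zero:
  assumes "finite I" "\<And>i j. i \<in> I \<Longrightarrow> j \<in> I \<Longrightarrow> i \<noteq> j \<Longrightarrow> cinner (u i) (u j) = 0"
  shows "(norm (\<Sum>i\<in>I. u i))\<^sup>2 = (\<Sum>i\<in>I. (norm (u i))\<^sup>2)"
  using assms by (intro norm_sum_Pythagorean) (auto simp: pairwise_def orthogonal_def inner_eq_Re_cinner)

definition orthonormal :: "(complex^'a::finite) set \<Rightarrow> bool" where
  "orthonormal S \<longleftrightarrow> (\<forall>a\<in>S. \<forall>b\<in>S. cinner a b = (if a = b then 1 else 0))"

lemma cinner_sum_orthonormal: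
  assumes "finite S" "orthonormal S" "b \<in> S"
  shows "cinner b (\<Sum>a\<in>S. u a *s a) = u b"
proof -
  have "cinner b (\<Sum>a\<in>S. u a *s a) = (\<Sum>a\<in>S. if a = b then u a else 0)"
    using assms(2,3) unfolding cinner_sum_right cinner_smult_right orthonormal_def
    by (intro sum.cong) auto
  also have "\<dots> = u b" using assms(1,3) by simp
  finally show ?thesis .
qed

lemma orthonormal_expansion:
  assumes "finite S" "orthonormal S" "x \<in> vec.span S"
  shows "x = (\<Sum>b\<in>S. cinner b x *s b)"
proof -
  obtain u where u: "x = (\<Sum>a\<in>S. u a *s a)"
    using assms(3) vec.span_finite[OF assms(1)] by auto
  then have "cinner b x = u b" if "b \<in> S" for b
    using cinner_sum_orthonormal[OF assms(1,2) that] by simp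
  then show ?thesis using u by (metis (no_types, lifting) sum.cong)
qed

lemma orthonormal_span_exists:
  fixes C :: "(complex^'a::finite) set"
  assumes "finite C"
  obtains S where "finite S" "card S \<le> card C" "C \<subseteq> vec.span S" "orthonormal S"
  using assms
proof (induction C arbitrary: thesis rule: finite_induct)
  case empty
  then show ?case by (auto simp: orthonormal_def)
next
  case (insert x C)
  then obtain S where S: "finite S" "card S \<le> card C" "C \<subseteq> vec.span S" "orthonormal S"
    by auto
  define p where "p = (\<Sum>b\<in>S. cinner b x *s b)"
  define y where "y = x - p"
  have p_span: "p \<in> vec.span S"
    unfolding p_def by (intro vec.span_sum vec.span_scale vec.span_base)
  have y_orth: "cinner b y = 0" if "b \<in> S" for b
    using cinner_sum_orthonormal[OF S(1,4) that] by (simp add: y_def p_def cinner_diff_right)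
  show ?case
  proof (cases "y = 0")
    case True
    then show ?thesis using S insert p_span by (intro insert.prems[of S]) (auto simp: y_def)
  next
    case False
    define e where "e = complex_of_real (1 / norm y) *s y"
    have "norm e = 1"
      using False by (simp add: e_def norm_smult_vec norm_divide)
    then have e_unit: "cinner e e = 1" by (simp add: cinner_self)
    have e_orth: "cinner e b = 0" "cinner b e = 0" if "b \<in> S" for b
      using y_orth[OF that] by (auto simp: e_def cinner_smult_left cinner_smult_right cinner_commute[of y b])
    then have "e \<notin> S" using e_unit by force
    have "y = complex_of_real (norm y) *s e"
      using False by (simp add: e_def vector_smult_assoc)
    then have "y \<in> vec.span (insert e S)"
      by (metis insertI1 vec.span_base vec.span_scale)
    moreover have "p \<in> vec.span (insert e S)"
      using p_span vec.span_mono[of S "insert e S"] by blast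
    ultimately have "x \<in> vec.span (insert e S)"
      unfolding y_def by (metis diff_add_cancel vec.span_add)
    moreover have "orthonormal (insert e S)"
      using S(4) e_unit e_orth unfolding orthonormal_def by auto
    ultimately show ?thesis
      using S insert \<open>e \<notin> S\<close> vec.span_mono[of S "insert e S"]
      by (intro insert.prems[of "insert e S"]) auto
  qed
qed

definition tensor :: "complex^'n::finite \<Rightarrow> complex^'m::finite \<Rightarrow> complex^('n \<times> 'm)" where
  "tensor x y = (\<chi> pq. x $ fst pq * y $ snd pq)"

lemma tensor_zero_right [simp]: "tensor x 0 = 0"
  by (simp add: tensor_def vec_eq_iff)

lemma cinner_tensor: "cinner (tensor x y) (tensor x' y') = cinner x x' * cinner y y'"
proof -
  have "cinner (tensor x y) (tensor x' y') =
        (\<Sum>(p, q)\<in>UNIV \<times> UNIV. (cnj (x $ p) * x' $ p) * (cnj (y $ q) * y' $ q))"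
    by (simp add: cinner_def tensor_def UNIV_Times_UNIV case_prod_beta mult_ac)
  also have "\<dots> = (\<Sum>p\<in>UNIV. \<Sum>q\<in>UNIV. (cnj (x $ p) * x' $ p) * (cnj (y $ q) * y' $ q))"
    by (rule sum.cartesian_product[symmetric])
  also have "\<dots> = cinner x x' * cinner y y'"
    by (simp add: cinner_def sum_product)
  finally show ?thesis .
qed

lemma rows_subset_iff: "rows A \<subseteq> T \<longleftrightarrow> (\<forall>i. A $ i \<in> T)"
  by (auto simp: rows_def row_def)

lemma schmidt_rank_le_dim:
  assumes "rows (coeff_matrix v) \<subseteq> vec.span W"
  shows "schmidt_rank v \<le> vec.dim W"
  using vec.dim_subset[OF assms] by (simp add: schmidt_rank_def row_rank_def_gen)

lemma schmidt_rank_smult_le: "schmidt_rank (c *s v) \<le> schmidt_rank v"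
proof -
  have "coeff_matrix (c *s v) $ p = c *s (coeff_matrix v $ p)" for p
    by (simp add: coeff_matrix_def vec_eq_iff)
  moreover have "coeff_matrix v $ p \<in> rows (coeff_matrix v)" for p
    using rows_subset_iff by blast
  ultimately have "rows (coeff_matrix (c *s v)) \<subseteq> vec.span (rows (coeff_matrix v))"
    unfolding rows_subset_iff by (metis vec.span_base vec.span_scale)
  then have "schmidt_rank (c *s v) \<le> vec.dim (rows (coeff_matrix v))"
    by (rule schmidt_rank_le_dim)
  then show ?thesis
    by (simp add: schmidt_rank_def row_rank_def_gen)
qed

lemma schmidt_rank_sum_tensor_le:
  assumes "finite I"
  shows "schmidt_rank (\<Sum>i\<in>I. tensor (a i) (b i)) \<le> card I"
proof -
  have "coeff_matrix (\<Sum>i\<in>I. tensor (a i) (b i)) $ p = (\<Sum>i\<in>I. (a i $ p) *s b i)" for p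
    by (simp add: coeff_matrix_def vec_eq_iff sum_component tensor_def)
  moreover have "(\<Sum>i\<in>I. (a i $ p) *s b i) \<in> vec.span (b ` I)" for p
    by (intro vec.span_sum vec.span_scale vec.span_base) auto
  ultimately have "rows (coeff_matrix (\<Sum>i\<in>I. tensor (a i) (b i))) \<subseteq> vec.span (b ` I)"
    unfolding rows_subset_iff by simp
  then have "schmidt_rank (\<Sum>i\<in>I. tensor (a i) (b i)) \<le> vec.dim (b ` I)"
    by (rule schmidt_rank_le_dim)
  also have "\<dots> \<le> card I"
    using assms by (meson card_image_le order_trans vec.dim_le_card vec.span_superset finite_imageI)
  finally show ?thesis .
qed

lemma schmidt_rank_axis: "schmidt_rank (axis (p, q) 1) \<le> 1"
proof -
  have "axis (p, q) 1 = tensor (axis p 1) (axis q 1)"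
    by (simp add: tensor_def axis_def vec_eq_iff)
  then show ?thesis
    using schmidt_rank_sum_tensor_le[of "{()}" "\<lambda>_. axis p 1" "\<lambda>_. axis q 1"] by simp
qed

lemma sum_tensor_coeff_rows:
  assumes "finite S" "orthonormal S" "rows (coeff_matrix v) \<subseteq> vec.span S"
  shows "v = (\<Sum>b\<in>S. tensor (\<chi> p. cinner b (coeff_matrix v $ p)) b)"
proof -
  have "v $ (p, q) = (\<Sum>b\<in>S. tensor (\<chi> p. cinner b (coeff_matrix v $ p)) b) $ (p, q)" for p q
  proof -
    have "v $ (p, q) = coeff_matrix v $ p $ q"
      by (simp add: coeff_matrix_def)
    also have "\<dots> = (\<Sum>b\<in>S. cinner b (coeff_matrix v $ p) *s b) $ q"
      using orthonormal_expansion[OF assms(1,2)] assms(3) unfolding rows_subset_iff by metis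
    finally show ?thesis by (simp add: sum_component tensor_def)
  qed
  then show ?thesis by (simp add: vec_eq_iff)
qed

lemma schmidt_decomposition:
  assumes "schmidt_rank v \<le> k"
  obtains u :: "nat \<Rightarrow> complex^('n::finite \<times> 'm::finite)"
  where "v = (\<Sum>i<k. u i)"
    and "\<And>i j. i \<noteq> j \<Longrightarrow> cinner (u i) (u j) = 0"
    and "\<And>I. finite I \<Longrightarrow> schmidt_rank (\<Sum>i\<in>I. u i) \<le> card I"
proof -
  define R where "R = rows (coeff_matrix v)"
  obtain B where B: "B \<subseteq> R" "vec.independent B" "R \<subseteq> vec.span B" "card B = vec.dim R"
    by (rule vec.basis_exists)
  obtain S where S: "finite S" "card S \<le> card B" "B \<subseteq> vec.span S" "orthonormal S"
    using orthonormal_span_exists[OF vec.finiteI_independent[OF B(2)]] by blast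
  have R_span: "R \<subseteq> vec.span S"
    using B(3) S(3) vec.span_minimal[OF _ vec.subspace_span] by blast
  have card_S: "card S \<le> k"
    using S(2) B(4) assms by (simp add: schmidt_rank_def row_rank_def_gen R_def)
  obtain f where f: "bij_betw f {..<card S} S"
    using ex_bij_betw_nat_finite[OF S(1)] by (auto simp: lessThan_atLeast0)
  define b where "b i = (if i < card S then f i else 0)" for i
  define \<alpha> where "\<alpha> s = (\<chi> p. cinner s (coeff_matrix v $ p))" for s
  define u where "u i = tensor (\<alpha> (b i)) (b i)" for i
  show thesis
  proof
    have "v = (\<Sum>s\<in>S. tensor (\<alpha> s) s)"
      unfolding \<alpha>_def using sum_tensor_coeff_rows[OF S(1,4)] R_span R_def by blast
    also have "\<dots> = (\<Sum>i<card S. u i)"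
      by (simp add: u_def b_def sum.reindex_bij_betw[OF f, symmetric])
    also have "\<dots> = (\<Sum>i<k. u i)"
      using card_S by (intro sum.mono_neutral_left) (auto simp: u_def b_def)
    finally show "v = (\<Sum>i<k. u i)" .
  next
    fix i j :: nat assume "i \<noteq> j"
    moreover have "f i \<noteq> f j" "f i \<in> S" "f j \<in> S" if "i < card S" "j < card S"
      using f \<open>i \<noteq> j\<close> that unfolding bij_betw_def inj_on_def by auto
    ultimately have "cinner (b i) (b j) = 0"
      using S(4) unfolding b_def orthonormal_def by auto
    then show "cinner (u i) (u j) = 0" by (simp add: u_def cinner_tensor)
  next
    fix I :: "nat set" assume "finite I"
    then show "schmidt_rank (\<Sum>i\<in>I. u i) \<le> card I"
      unfolding u_def by (rule schmidt_rank_sum_tensor_le)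
  qed
qed

definition cyclic_window :: "nat \<Rightarrow> nat \<Rightarrow> nat \<Rightarrow> nat set" where
  "cyclic_window k h j = (\<lambda>t. (j + t) mod k) ` {..<h}"

lemma finite_cyclic_window [simp]: "finite (cyclic_window k h j)"
  by (simp add: cyclic_window_def)

lemma card_cyclic_window_le: "card (cyclic_window k h j) \<le> h"
  unfolding cyclic_window_def using card_image_le[of "{..<h}"] by simp

lemma inj_on_add_mod: "inj_on (\<lambda>t. (j + t) mod k) {..<k::nat}"
proof (rule inj_onI)
  fix a b assume "a \<in> {..<k}" "b \<in> {..<k}" and eq: "(j + a) mod k = (j + b) mod k"
  from eq have "a mod k = b mod k" by (simp add: nat_mod_eq_iff)
  with \<open>a \<in> {..<k}\<close> \<open>b \<in> {..<k}\<close> show "a = b" by simp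
qed

lemma sum_cyclic_windows:
  fixes g :: "nat \<Rightarrow> 'a::comm_semiring_1"
  assumes "0 < k" "h \<le> k"
  shows "(\<Sum>j<k. \<Sum>i\<in>cyclic_window k h j. g i) = of_nat h * (\<Sum>i<k. g i)"
proof -
  have "(\<Sum>i\<in>cyclic_window k h j. g i) = (\<Sum>t<h. g ((j + t) mod k))" for j
    unfolding cyclic_window_def using assms(2)
    by (subst sum.reindex) (auto intro: inj_on_subset[OF inj_on_add_mod])
  moreover have "(\<Sum>j<k. g ((j + t) mod k)) = (\<Sum>i<k. g i)" for t
  proof -
    have "(\<lambda>j. (t + j) mod k) ` {..<k} = {..<k}"
      using assms(1) by (intro endo_inj_surj inj_on_add_mod) auto
    then show ?thesis
      using sum.reindex[OF inj_on_add_mod, of g t k] by (simp add: add.commute)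
  qed
  ultimately show ?thesis
    by (simp add: sum.swap[of _ "{..<h}"])
qed

lemma braket_eq_cinner: "braket w X v = cinner w (X *v v)"
  by (simp add: braket_def cinner_def)

lemma braket_sum_left: "braket (sum f I) X v = (\<Sum>i\<in>I. braket (f i) X v)"
  by (simp add: braket_eq_cinner cinner_sum_left)

lemma braket_sum_right: "braket w X (sum f I) = (\<Sum>i\<in>I. braket w X (f i))"
  by (simp add: braket_eq_cinner linear_sum[OF matrix_vector_mul_linear] cinner_sum_right)

lemma braket_smult: "braket (c *s w) X (d *s v) = cnj c * d * braket w X v"
proof -
  have "X *v (d *s v) = d *s (X *v v)"
    by (simp add: vec_eq_iff matrix_vector_mult_def sum_distrib_left mult_ac)
  then show ?thesis by (simp add: braket_eq_cinner cinner_smult_left cinner_smult_right)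
qed

lemma bdd_above_norm_braket_unit: "bdd_above {cmod (braket w X v) | v w. norm v = 1 \<and> norm w = 1 \<and> P v w}"
proof -
  obtain K where K: "\<And>v. norm (X *v v) \<le> norm v * K"
    using bounded_linear.pos_bounded[OF matrix_vector_mul_bounded_linear] by blast
  have "cmod (braket w X v) \<le> K" if "norm v = 1" "norm w = 1" for v w
    using norm_cinner_le[of w "X *v v"] K[of v] that by (simp add: braket_eq_cinner)
  then show ?thesis unfolding bdd_above_def by blast
qed

lemma SK_norm_upper:
  assumes "norm v = 1" "norm w = 1" "schmidt_rank v \<le> k" "schmidt_rank w \<le> k"
  shows "cmod (braket w X v) \<le> SK_norm k X"
  unfolding SK_norm_def using assms by (intro cSup_upper bdd_above_norm_braket_unit) blast

lemma unit_vector_schmidt_rank_le_1: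
  obtains e :: "complex^('n::finite \<times> 'm::finite)" where "norm e = 1" "schmidt_rank e \<le> 1"
  using norm_axis_complex schmidt_rank_axis by blast

lemma SK_norm_least:
  fixes X :: "complex ^ ('n::finite \<times> 'm::finite) ^ ('n \<times> 'm)"
  assumes "1 \<le> k"
    and "\<And>v w. norm v = 1 \<Longrightarrow> norm w = 1 \<Longrightarrow> schmidt_rank v \<le> k \<Longrightarrow> schmidt_rank w \<le> k
      \<Longrightarrow> cmod (braket w X v) \<le> B"
  shows "SK_norm k X \<le> B"
proof -
  obtain e :: "complex^('n \<times> 'm)" where "norm e = 1" "schmidt_rank e \<le> k"
    using unit_vector_schmidt_rank_le_1 assms(1) order_trans by metis
  then show ?thesis
    unfolding SK_norm_def using assms(2) by (intro cSup_least) blast+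
qed

lemma SK_norm_nonneg:
  fixes X :: "complex ^ ('n::finite \<times> 'm::finite) ^ ('n \<times> 'm)"
  assumes "1 \<le> k"
  shows "0 \<le> SK_norm k X"
proof -
  obtain e :: "complex^('n \<times> 'm)" where "norm e = 1" "schmidt_rank e \<le> k"
    using unit_vector_schmidt_rank_le_1 assms order_trans by metis
  then show ?thesis
    using SK_norm_upper norm_ge_zero order_trans by metis
qed

lemma norm_braket_le_SK_norm:
  assumes "schmidt_rank v \<le> h" "schmidt_rank w \<le> h"
  shows "cmod (braket w X v) \<le> SK_norm h X * norm w * norm v"
proof (cases "v = 0 \<or> w = 0")
  case True
  then show ?thesis by (auto simp: braket_def)
next
  case False
  define c where "c x = complex_of_real (1 / norm x)" for x :: "complex^('a \<times> 'b)"
  have unit: "norm (c x *s x) = 1" if "x \<noteq> 0" for x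
    using that by (simp add: c_def norm_smult_vec norm_divide)
  have "cmod (braket (c w *s w) X (c v *s v)) \<le> SK_norm h X"
    using False assms schmidt_rank_smult_le order_trans
    by (intro SK_norm_upper unit) blast+
  moreover have "cmod (braket (c w *s w) X (c v *s v)) = cmod (braket w X v) / (norm w * norm v)"
    by (simp add: braket_smult c_def norm_mult norm_divide)
  ultimately show ?thesis
    using False by (simp add: divide_le_eq mult_ac)
qed

lemma sum_norms_cyclic_windows_le:
  fixes u :: "nat \<Rightarrow> complex^'a::finite"
  assumes "0 < k" "h \<le> k" "\<And>i j. i \<noteq> j \<Longrightarrow> cinner (u i) (u j) = 0"
  shows "(\<Sum>j<k. norm (\<Sum>i\<in>cyclic_window k h j. u i))
    \<le> sqrt (real k * real h) * norm (\<Sum>i<k. u i)"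
proof -
  define V where "V j = (\<Sum>i\<in>cyclic_window k h j. u i)" for j
  have pythagoras: "(norm (\<Sum>i\<in>I. u i))\<^sup>2 = (\<Sum>i\<in>I. (norm (u i))\<^sup>2)" if "finite I" for I
    using that assms(3) by (rule norm_sum_pairwise_cinner_zero)
  have "(\<Sum>j<k. (norm (V j))\<^sup>2) = real h * (norm (\<Sum>i<k. u i))\<^sup>2"
    by (simp add: V_def pythagoras sum_cyclic_windows[OF assms(1,2)])
  have "(\<Sum>j<k. norm (V j)) = (\<Sum>j<k. \<bar>1\<bar> * \<bar>norm (V j)\<bar>)"
    by simp
  also have "\<dots> \<le> L2_set (\<lambda>_. 1) {..<k} * L2_set (\<lambda>j. norm (V j)) {..<k}"
    by (rule L2_set_mult_ineq)
  also have "\<dots> = sqrt (real k) * sqrt (real h * (norm (\<Sum>i<k. u i))\<^sup>2)"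
    by (simp add: L2_set_def \<open>(\<Sum>j<k. (norm (V j))\<^sup>2) = _\<close>)
  also have "\<dots> = sqrt (real k * real h) * norm (\<Sum>i<k. u i)"
    by (simp add: real_sqrt_mult)
  finally show ?thesis unfolding V_def .
qed

lemma sum_brakets_cyclic_windows:
  assumes "0 < k" "h \<le> k"
  shows "(\<Sum>l<k. \<Sum>j<k. braket (\<Sum>s\<in>cyclic_window k h l. y s) X (\<Sum>i\<in>cyclic_window k h j. u i))
    = of_nat h * of_nat h * braket (\<Sum>s<k. y s) X (\<Sum>i<k. u i)"
  (is "?lhs = _")
proof -
  let ?V = "\<lambda>j. \<Sum>i\<in>cyclic_window k h j. u i"
  have "?lhs = (\<Sum>l<k. \<Sum>s\<in>cyclic_window k h l. \<Sum>j<k. braket (y s) X (?V j))"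
    unfolding braket_sum_left by (intro sum.cong refl sum.swap)
  also have "\<dots> = (\<Sum>l<k. \<Sum>s\<in>cyclic_window k h l. of_nat h * braket (y s) X (\<Sum>i<k. u i))"
    by (simp add: braket_sum_right sum_cyclic_windows[OF assms])
  also have "\<dots> = of_nat h * of_nat h * braket (\<Sum>s<k. y s) X (\<Sum>i<k. u i)"
    by (simp add: sum_cyclic_windows[OF assms] braket_sum_left sum_distrib_left mult.assoc)
  finally show ?thesis .
qed

lemma norm_braket_le_ratio_SK_norm:
  fixes X :: "complex ^ ('n::finite \<times> 'm::finite) ^ ('n \<times> 'm)"
  assumes "1 \<le> h" "h \<le> k"
    and "norm v = 1" "norm w = 1" "schmidt_rank v \<le> k" "schmidt_rank w \<le> k"
  shows "cmod (braket w X v) \<le> real k / real h * SK_norm h X"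
proof -
  obtain u where u: "v = (\<Sum>i<k. u i)" "\<And>i j. i \<noteq> j \<Longrightarrow> cinner (u i) (u j) = 0"
    "\<And>I. finite I \<Longrightarrow> schmidt_rank (\<Sum>i\<in>I. u i) \<le> card I"
    using schmidt_decomposition[OF assms(5)] by blast
  obtain y where y: "w = (\<Sum>i<k. y i)" "\<And>i j. i \<noteq> j \<Longrightarrow> cinner (y i) (y j) = 0"
    "\<And>I. finite I \<Longrightarrow> schmidt_rank (\<Sum>i\<in>I. y i) \<le> card I"
    using schmidt_decomposition[OF assms(6)] by blast
  define V where "V j = (\<Sum>i\<in>cyclic_window k h j. u i)" for j
  define W where "W j = (\<Sum>i\<in>cyclic_window k h j. y i)" for j
  define N where "N = SK_norm h X"
  define r where "r = sqrt (real k * real h)"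
  have "0 < h" "0 < k" using assms(1,2) by auto
  have rank_V: "schmidt_rank (V j) \<le> h" and rank_W: "schmidt_rank (W j) \<le> h" for j
    unfolding V_def W_def using u(3) y(3) card_cyclic_window_le order_trans
    by (metis finite_cyclic_window)+
  have sum_V: "(\<Sum>j<k. norm (V j)) \<le> r"
    using sum_norms_cyclic_windows_le[of k h u, OF \<open>0 < k\<close> assms(2) u(2)] u(1) assms(3)
    by (simp add: V_def r_def)
  have sum_W: "(\<Sum>l<k. norm (W l)) \<le> r"
    using sum_norms_cyclic_windows_le[of k h y, OF \<open>0 < k\<close> assms(2) y(2)] y(1) assms(4)
    by (simp add: W_def r_def)
  have "real h * real h * cmod (braket w X v) = cmod (\<Sum>l<k. \<Sum>j<k. braket (W l) X (V j))"
    using sum_brakets_cyclic_windows[OF \<open>0 < k\<close> assms(2), of y X u] u(1) y(1)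
    by (simp add: V_def W_def norm_mult)
  also have "\<dots> \<le> (\<Sum>l<k. \<Sum>j<k. cmod (braket (W l) X (V j)))"
    by (rule order_trans[OF norm_sum sum_mono[OF norm_sum]])
  also have "\<dots> \<le> (\<Sum>l<k. \<Sum>j<k. N * norm (W l) * norm (V j))"
    unfolding N_def using norm_braket_le_SK_norm rank_V rank_W by (intro sum_mono) blast
  also have "\<dots> = N * ((\<Sum>l<k. norm (W l)) * (\<Sum>j<k. norm (V j)))"
    by (simp add: sum_product sum_distrib_left mult_ac)
  also have "\<dots> \<le> N * (r * r)"
    using sum_V sum_W SK_norm_nonneg[OF assms(1)] unfolding N_def
    by (intro mult_left_mono mult_mono) (auto simp: r_def intro: sum_nonneg)
  also have "\<dots> = real h * real h * (real k / real h * N)"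
    using \<open>0 < h\<close> by (simp add: r_def)
  finally show ?thesis
    using \<open>0 < h\<close> by (simp add: N_def pos_le_divide_eq mult.commute)
qed

theorem theorem4p13:
  fixes X :: "complex ^ ('n::finite \<times> 'm::finite) ^ ('n \<times> 'm)"
    and h k :: nat
  assumes "CARD('m) \<le> CARD('n)"
    and "1 \<le> h" and "h \<le> k" and "k \<le> CARD('m)"
  shows "SK_norm h X \<le> SK_norm k X \<and> SK_norm k X \<le> (real k / real h) * SK_norm h X"
proof
  show "SK_norm h X \<le> SK_norm k X"
    using assms(2,3) by (intro SK_norm_least) (auto intro: SK_norm_upper order_trans)
  show "SK_norm k X \<le> (real k / real h) * SK_norm h X"
    using assms(2,3) by (intro SK_norm_least norm_braket_le_ratio_SK_norm) auto
qed

end
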